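(* Let $\mu$ be a fuzzy sub $\Gamma$-hypersemigroup of a fuzzy $\Gamma$-hypersemigroup $(M,\circ)$. Then $\mu$ is a fuzzy $\Gamma$-hyper bi-ideal of $(M,\circ)$ if and only if $(\mu\circ\alpha\circ\chi_M)\circ\beta\circ\mu\subseteq\mu$ for all $\alpha,\beta\in\Gamma$.
   Context: $M,\Gamma$ are nonempty sets; a fuzzy subset of $M$ is a map $M\to[0,1]$. A fuzzy $\Gamma$-hyperoperation assigns to each $(a,\gamma,b)\in M\times\Gamma\times M$ a fuzzy subset $a\circ\gamma\circ b$. For $a\in M$ and fuzzy $\mu$: $(a\circ\gamma\circ\mu)(r)=\bigvee_{t\in M}((a\circ\gamma\circ t)(r)\wedge\mu(t))$ if $\mu\ne0$, else $0$; $(\mu\circ\gamma\circ a)(r)=\bigvee_{t\in M}(\mu(t)\wedge(t\circ\gamma\circ a)(r))$ if $\mu\ne0$, else $0$. For fuzzy $\mu,\nu$: $(\mu\circ\gamma\circ\nu)(t)=\bigvee_{p,q\in M}(\mu(p)\wedge(p\circ\gamma\circ q)(t)\wedge\nu(q))$. $(M,\circ)$ is a fuzzy $\Gamma$-hypersemigroup if $(a\circ\alpha\circ b)\circ\beta\circ c=a\circ\alpha\circ(b\circ\beta\circ c)$ for all $a,b,c\in M$, $\alpha,\beta\in\Gamma$. $\chi_M$ is the constant function $1$. For fuzzy sets, $\mu\subseteq\nu$ means $\mu(x)\le\nu(x)$ for all $x$. A fuzzy sub $\Gamma$-hypersemigroup is a fuzzy subset $\mu$ with $\mu\circ\gamma\circ\mu\subseteq\mu$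 for all $\gamma\in\Gamma$. A fuzzy $\Gamma$-hyper bi-ideal is a fuzzy sub $\Gamma$-hypersemigroup $\mu$ with $(\mu\circ\alpha\circ y)\circ\beta\circ\mu\subseteq\mu$ for all $y\in M$, $\alpha,\beta\in\Gamma$. *)

theory Defs
  imports Main "HOL.Real"
begin

text \<open>M is the type 'm, Gamma is the type 'g (types are nonempty).
  Fuzzy subsets are real-valued maps with values in [0,1].\<close>

definition fuzzy :: "('m \<Rightarrow> real) \<Rightarrow> bool" where
  "fuzzy \<mu> \<longleftrightarrow> (\<forall>x. 0 \<le> \<mu> x \<and> \<mu> x \<le> 1)"

definition fuzzy_hyperop :: "('m \<Rightarrow> 'g \<Rightarrow> 'm \<Rightarrow> 'm \<Rightarrow> real) \<Rightarrow> bool" where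
  "fuzzy_hyperop H \<longleftrightarrow> (\<forall>a g b. fuzzy (H a g b))"

definition elem_fz :: "('m \<Rightarrow> 'g \<Rightarrow> 'm \<Rightarrow> 'm \<Rightarrow> real) \<Rightarrow> 'm \<Rightarrow> 'g \<Rightarrow> ('m \<Rightarrow> real) \<Rightarrow> 'm \<Rightarrow> real" where
  "elem_fz H a g \<mu> = (\<lambda>r. if \<mu> = (\<lambda>_. 0) then 0 else (SUP t. min (H a g t r) (\<mu> t)))"

definition fz_elem :: "('m \<Rightarrow> 'g \<Rightarrow> 'm \<Rightarrow> 'm \<Rightarrow> real) \<Rightarrow> ('m \<Rightarrow> real) \<Rightarrow> 'g \<Rightarrow> 'm \<Rightarrow> 'm \<Rightarrow> real" where
  "fz_elem H \<mu> g a = (\<lambda>r. if \<mu> = (\<lambda>_. 0) then 0 else (SUP t. min (\<mu> t) (H t g a r)))"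

definition fz_fz :: "('m \<Rightarrow> 'g \<Rightarrow> 'm \<Rightarrow> 'm \<Rightarrow> real) \<Rightarrow> ('m \<Rightarrow> real) \<Rightarrow> 'g \<Rightarrow> ('m \<Rightarrow> real) \<Rightarrow> 'm \<Rightarrow> real" where
  "fz_fz H \<mu> g \<nu> = (\<lambda>t. SUP pq. min (min (\<mu> (fst pq)) (H (fst pq) g (snd pq) t)) (\<nu> (snd pq)))"

definition fuzzy_Gamma_hypersemigroup :: "('m \<Rightarrow> 'g \<Rightarrow> 'm \<Rightarrow> 'm \<Rightarrow> real) \<Rightarrow> bool" where
  "fuzzy_Gamma_hypersemigroup H \<longleftrightarrow> fuzzy_hyperop H \<and>
     (\<forall>a b c \<alpha> \<beta>. fz_elem H (H a \<alpha> b) \<beta> c = elem_fz H a \<alpha> (H b \<beta> c))"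

definition chi_M :: "'m \<Rightarrow> real" where
  "chi_M = (\<lambda>_. 1)"

definition fsubset :: "('m \<Rightarrow> real) \<Rightarrow> ('m \<Rightarrow> real) \<Rightarrow> bool" where
  "fsubset \<mu> \<nu> \<longleftrightarrow> (\<forall>x. \<mu> x \<le> \<nu> x)"

definition fuzzy_sub_hypersemigroup :: "('m \<Rightarrow> 'g \<Rightarrow> 'm \<Rightarrow> 'm \<Rightarrow> real) \<Rightarrow> ('m \<Rightarrow> real) \<Rightarrow> bool" where
  "fuzzy_sub_hypersemigroup H \<mu> \<longleftrightarrow> fuzzy \<mu> \<and> (\<forall>g. fsubset (fz_fz H \<mu> g \<mu>) \<mu>)"

definition fuzzy_hyper_bi_ideal :: "('m \<Rightarrow> 'g \<Rightarrow> 'm \<Rightarrow> 'm \<Rightarrow> real) \<Rightarrow> ('m \<Rightarrow> real) \<Rightarrow> bool" where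
  "fuzzy_hyper_bi_ideal H \<mu> \<longleftrightarrow> fuzzy_sub_hypersemigroup H \<mu> \<and>
     (\<forall>y \<alpha> \<beta>. fsubset (fz_fz H (fz_elem H \<mu> \<alpha> y) \<beta> \<mu>) \<mu>)"

end

theory Submission
  imports Defs
begin

text \<open>The fuzzy set \<open>\<mu> \<circ> \<alpha> \<circ> \<chi>\<^sub>M\<close> is the pointwise supremum of the sets \<open>\<mu> \<circ> \<alpha> \<circ> y\<close>,
  \<open>y \<in> M\<close>. Since \<open>\<nu> \<mapsto> \<nu> \<circ> \<beta> \<circ> \<mu>\<close> is monotone and commutes with such suprema, the
  bi-ideal condition for every single \<open>y\<close> is equivalent to the one for \<open>\<chi>\<^sub>M\<close>.\<close>

lemma fuzzy_hyperopD:
  assumes "fuzzy_hyperop H"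
  shows "0 \<le> H a g b r" and "H a g b r \<le> 1"
  using assms unfolding fuzzy_hyperop_def fuzzy_def by auto

lemma fz_fz_upper:
  assumes "fuzzy_hyperop H"
  shows "min (min (A p) (H p g q t)) (B q) \<le> fz_fz H A g B t"
proof -
  have "bdd_above (range (\<lambda>pq. min (min (A (fst pq)) (H (fst pq) g (snd pq) t)) (B (snd pq))))"
    using fuzzy_hyperopD(2)[OF assms] by (intro bdd_aboveI[where M=1]) (auto simp: min_le_iff_disj)
  then show ?thesis
    unfolding fz_fz_def using cSUP_upper[of "(p, q)" UNIV] by force
qed

lemma fz_fz_least:
  assumes "\<And>p q. min (min (A p) (H p g q t)) (B q) \<le> c"
  shows "fz_fz H A g B t \<le> c"
  unfolding fz_fz_def by (rule cSUP_least) (auto intro: assms)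

lemma fz_elem_upper:
  assumes "fuzzy_hyperop H" and "\<mu> \<noteq> (\<lambda>_. 0)"
  shows "min (\<mu> p) (H p g a r) \<le> fz_elem H \<mu> g a r"
proof -
  have "bdd_above (range (\<lambda>t. min (\<mu> t) (H t g a r)))"
    using fuzzy_hyperopD(2)[OF assms(1)] by (intro bdd_aboveI[where M=1]) (auto intro: min.coboundedI2)
  then show ?thesis
    unfolding fz_elem_def using assms(2) cSUP_upper[of p UNIV] by force
qed

lemma fz_fz_mono_left:
  assumes "fuzzy_hyperop H" and "fsubset A A'"
  shows "fsubset (fz_fz H A g B) (fz_fz H A' g B)"
  unfolding fsubset_def
proof
  fix t
  show "fz_fz H A g B t \<le> fz_fz H A' g B t"
  proof (rule fz_fz_least)
    fix p q
    have "min (min (A' p) (H p g q t)) (B q) \<le> fz_fz H A' g B t"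
      by (rule fz_fz_upper[OF assms(1)])
    then show "min (min (A p) (H p g q t)) (B q) \<le> fz_fz H A' g B t"
      using assms(2) unfolding fsubset_def by (smt (verit) min_def)
  qed
qed

lemma fz_fz_fsubset_of_bounded_by_family:
  assumes "fuzzy_hyperop H"
    and below: "\<And>s c. 0 \<le> c \<Longrightarrow> (\<And>y. A y s \<le> c) \<Longrightarrow> A' s \<le> c"
    and pieces: "\<And>y. fsubset (fz_fz H (A y) g B) C"
    and "\<And>t. 0 \<le> C t"
  shows "fsubset (fz_fz H A' g B) C"
  unfolding fsubset_def
proof
  fix t
  show "fz_fz H A' g B t \<le> C t"
  proof (rule fz_fz_least)
    fix p q
    show "min (min (A' p) (H p g q t)) (B q) \<le> C t"
    proof (cases "min (H p g q t) (B q) \<le> C t")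
      case True
      then show ?thesis by linarith
    next
      case False
      have "A y p \<le> C t" for y
      proof -
        have "min (min (A y p) (H p g q t)) (B q) \<le> C t"
          using fz_fz_upper[OF assms(1), of "A y" p g q t B] pieces[of y]
          unfolding fsubset_def by (meson order_trans)
        then show ?thesis using False by linarith
      qed
      then have "A' p \<le> C t" using below assms(4) by blast
      then show ?thesis by linarith
    qed
  qed
qed

lemma fz_elem_fsubset_fz_fz_chi_M:
  assumes "fuzzy_hyperop H" and "fuzzy \<mu>"
  shows "fsubset (fz_elem H \<mu> \<alpha> y) (fz_fz H \<mu> \<alpha> chi_M)"
  unfolding fsubset_def
proof
  fix s
  have upper: "min (\<mu> t) (H t \<alpha> y s) \<le> fz_fz H \<mu> \<alpha> chi_M s" for t
  proof -
    have "min (\<mu> t) (H t \<alpha> y s) \<le> 1"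
      using assms(2) unfolding fuzzy_def by (meson min.coboundedI1)
    then show ?thesis
      using fz_fz_upper[OF assms(1), of \<mu> t \<alpha> y s chi_M] by (simp add: chi_M_def min.absorb1)
  qed
  show "fz_elem H \<mu> \<alpha> y s \<le> fz_fz H \<mu> \<alpha> chi_M s"
  proof (cases "\<mu> = (\<lambda>_. 0)")
    case True
    then show ?thesis
      using upper[of y] fuzzy_hyperopD(1)[OF assms(1), of y \<alpha> y s] by (simp add: fz_elem_def)
  next
    case False
    then show ?thesis
      unfolding fz_elem_def by (simp add: cSUP_least upper)
  qed
qed

lemma fz_fz_chi_M_least:
  assumes "fuzzy_hyperop H" and "0 \<le> c" and "\<And>y. fz_elem H \<mu> \<alpha> y s \<le> c"
  shows "fz_fz H \<mu> \<alpha> chi_M s \<le> c"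
proof (rule fz_fz_least)
  fix p q
  show "min (min (\<mu> p) (H p \<alpha> q s)) (chi_M q) \<le> c"
  proof (cases "\<mu> = (\<lambda>_. 0)")
    case True
    then show ?thesis using assms(2) by (simp add: chi_M_def)
  next
    case False
    then show ?thesis
      using fz_elem_upper[OF assms(1) False, of p \<alpha> q s] assms(3)[of q]
      by (simp add: chi_M_def)
  qed
qed

theorem theorem4p12:
  fixes H :: "'m \<Rightarrow> 'g \<Rightarrow> 'm \<Rightarrow> 'm \<Rightarrow> real" and \<mu> :: "'m \<Rightarrow> real"
  assumes "fuzzy_Gamma_hypersemigroup H"
    and "fuzzy_sub_hypersemigroup H \<mu>"
  shows "fuzzy_hyper_bi_ideal H \<mu> \<longleftrightarrow>
    (\<forall>\<alpha> \<beta>. fsubset (fz_fz H (fz_fz H \<mu> \<alpha> chi_M) \<beta> \<mu>) \<mu>)"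
proof -
  have H: "fuzzy_hyperop H"
    using assms(1) unfolding fuzzy_Gamma_hypersemigroup_def by blast
  have \<mu>: "fuzzy \<mu>"
    using assms(2) unfolding fuzzy_sub_hypersemigroup_def by blast
  then have \<mu>_nonneg: "\<And>t. 0 \<le> \<mu> t"
    unfolding fuzzy_def by blast
  have "(\<forall>y \<alpha> \<beta>. fsubset (fz_fz H (fz_elem H \<mu> \<alpha> y) \<beta> \<mu>) \<mu>) \<longleftrightarrow>
        (\<forall>\<alpha> \<beta>. fsubset (fz_fz H (fz_fz H \<mu> \<alpha> chi_M) \<beta> \<mu>) \<mu>)"
  proof (intro iffI allI)
    fix \<alpha> \<beta>
    assume pieces: "\<forall>y \<alpha> \<beta>. fsubset (fz_fz H (fz_elem H \<mu> \<alpha> y) \<beta> \<mu>) \<mu>"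
    have below: "fz_fz H \<mu> \<alpha> chi_M s \<le> c"
      if "0 \<le> c" and "\<And>y. fz_elem H \<mu> \<alpha> y s \<le> c" for s c
      using fz_fz_chi_M_least[OF H that] .
    show "fsubset (fz_fz H (fz_fz H \<mu> \<alpha> chi_M) \<beta> \<mu>) \<mu>"
      by (rule fz_fz_fsubset_of_bounded_by_family[OF H,
            where A = "fz_elem H \<mu> \<alpha>" and A' = "fz_fz H \<mu> \<alpha> chi_M"])
        (use below pieces \<mu>_nonneg in auto)
  next
    fix y \<alpha> \<beta>
    assume "\<forall>\<alpha> \<beta>. fsubset (fz_fz H (fz_fz H \<mu> \<alpha> chi_M) \<beta> \<mu>) \<mu>"
    then show "fsubset (fz_fz H (fz_elem H \<mu> \<alpha> y) \<beta> \<mu>) \<mu>"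
      using fz_fz_mono_left[OF H fz_elem_fsubset_fz_fz_chi_M[OF H \<mu>], of \<alpha> y \<beta> \<mu>]
      unfolding fsubset_def by (meson order_trans)
  qed
  then show ?thesis
    using assms(2) unfolding fuzzy_hyper_bi_ideal_def by blast
qed

end
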